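(* Let $\mathbb{F}$ be an infinite field and $n\ge2$. Then any two $2$-maximal nilpotent subsemigroups of $M(n,\mathbb{F})$ are isomorphic as semigroups.
   Context: $M(n,\mathbb{F})$ is the semigroup of $n\times n$ matrices over $\mathbb{F}$ under multiplication. A semigroup $S$ with zero is nilpotent of nilpotency degree $k$ if all products of $k$ elements of $S$ equal $0$ and some product of $k-1$ elements is nonzero. A nilpotent subsemigroup of $M(n,\mathbb{F})$ of nilpotency degree $k$ is $k$-maximal if it is not properly contained in another nilpotent subsemigroup of $M(n,\mathbb{F})$ of nilpotency degree $k$. *)

theory Defs
  imports "HOL-Analysis.Analysis"
begin

text \<open>Square matrices over a field, indexed by a finite type 'n (so n = CARD('n)).
  The semigroup operation is matrix multiplication (**).\<close>

definition msubsemigroup :: "('a::semiring_1 ^'n^'n) set \<Rightarrow> bool" where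
  "msubsemigroup S \<longleftrightarrow> (\<forall>A\<in>S. \<forall>B\<in>S. A ** B \<in> S)"

definition mprod :: "('a::semiring_1 ^'n^'n) list \<Rightarrow> 'a^'n^'n" where
  "mprod xs = foldr (**) xs (mat 1)"

definition nilpotent_of_degree :: "('a::semiring_1 ^'n^'n) set \<Rightarrow> nat \<Rightarrow> bool" where
  "nilpotent_of_degree S k \<longleftrightarrow>
     msubsemigroup S \<and> 0 \<in> S \<and>
     (\<forall>xs. length xs = k \<and> set xs \<subseteq> S \<longrightarrow> mprod xs = 0) \<and>
     (\<exists>xs. length xs = k - 1 \<and> set xs \<subseteq> S \<and> mprod xs \<noteq> 0)"

definition k_maximal :: "('a::semiring_1 ^'n^'n) set \<Rightarrow> nat \<Rightarrow> bool" where
  "k_maximal S k \<longleftrightarrow> nilpotent_of_degree S k \<and>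
     (\<forall>T. nilpotent_of_degree T k \<and> S \<subseteq> T \<longrightarrow> T = S)"

definition semigroup_isomorphic :: "('a::semiring_1 ^'n^'n) set \<Rightarrow> ('a^'n^'n) set \<Rightarrow> bool" where
  "semigroup_isomorphic S T \<longleftrightarrow>
     (\<exists>f. bij_betw f S T \<and> (\<forall>x\<in>S. \<forall>y\<in>S. f (x ** y) = f x ** f y))"

end

theory Submission
  imports Defs "HOL-Library.Equipollence" "HOL-Combinatorics.Transposition"
begin

text \<open>Adjoining all scalar multiples \<open>c A\<close> to a nilpotent subsemigroup of degree \<open>k\<close>
  preserves nilpotency of degree \<open>k\<close>, so a \<open>k\<close>-maximal one is closed under scalars. Since
  it contains a nonzero matrix, it has the cardinality of \<open>F\<close>, which for infinite \<open>F\<close> is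
  also that of \<open>M(n,F)\<close>. For \<open>k = 2\<close> all products in it vanish, so any bijection between
  two such semigroups that fixes \<open>0\<close> is an isomorphism.\<close>

lemma infinite_times_self_eqpoll: "infinite A \<Longrightarrow> A \<times> A \<approx> A"
  unfolding eqpoll_iff_card_of_ordIso using card_of_Times_same_infinite by blast

lemma PiE_lepoll_infinite:
  assumes "finite I" "infinite A"
  shows "(I \<rightarrow>\<^sub>E A) \<lesssim> A"
  using assms(1)
proof (induction I rule: finite_induct)
  case empty
  obtain a where "a \<in> A" using assms(2) by (metis ex_in_conv finite.emptyI)
  then show ?case unfolding lepoll_def
    by (intro exI[of _ "\<lambda>_. a"]) auto
next
  case (insert i I)
  have "(insert i I \<rightarrow>\<^sub>E A) \<lesssim> A \<times> (I \<rightarrow>\<^sub>E A)"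
    unfolding lepoll_def
  proof (intro exI[of _ "\<lambda>f. (f i, f(i := undefined))"] conjI)
    show "inj_on (\<lambda>f. (f i, f(i := undefined))) (insert i I \<rightarrow>\<^sub>E A)"
      by (rule inj_onI) (metis fun_upd_triv fun_upd_upd prod.inject)
    show "(\<lambda>f. (f i, f(i := undefined))) ` (insert i I \<rightarrow>\<^sub>E A) \<subseteq> A \<times> (I \<rightarrow>\<^sub>E A)"
      using insert.hyps(2) by (auto simp: PiE_def Pi_def extensional_def)
  qed
  also have "A \<times> (I \<rightarrow>\<^sub>E A) \<lesssim> A \<times> A"
    by (rule times_lepoll_mono) (auto simp: insert.IH)
  also have "A \<times> A \<approx> A" using assms(2) by (rule infinite_times_self_eqpoll)
  finally show ?case .
qed

lemma matrices_lepoll_infinite: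
  assumes "infinite (UNIV :: 'a set)"
  shows "(UNIV :: ('a^'n::finite^'m::finite) set) \<lesssim> (UNIV :: 'a set)"
proof -
  have "(UNIV :: ('a^'n^'m) set) \<lesssim> (UNIV :: ('m \<times> 'n) set) \<rightarrow>\<^sub>E (UNIV :: 'a set)"
    unfolding lepoll_def
  proof (intro exI[of _ "\<lambda>M (i, j). M $ i $ j"] conjI)
    show "inj_on (\<lambda>M (i, j). M $ i $ j) (UNIV :: ('a^'n^'m) set)"
      by (rule inj_onI) (simp add: vec_eq_iff fun_eq_iff)
  qed auto
  also have "\<dots> \<lesssim> (UNIV :: 'a set)"
    using assms by (intro PiE_lepoll_infinite) auto
  finally show ?thesis .
qed

lemma mat_mul_component: "(mat c ** A) $ i $ j = (c::'a::semiring_1) * A $ i $ j"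
  unfolding matrix_matrix_mult_def mat_def
  by (simp add: if_distrib if_distribR cong: if_cong)

lemma mat_mul_mat_mul:
  fixes A B :: "'a::comm_semiring_1^'n::finite^'n"
  shows "(mat c ** A) ** (mat d ** B) = mat (c * d) ** (A ** B)"
  unfolding vec_eq_iff matrix_matrix_mult_def[of "_ ** _"] mat_mul_component
  by (simp add: matrix_matrix_mult_def sum_distrib_left mult_ac)

lemma mprod_Nil [simp]: "mprod [] = mat 1"
  and mprod_Cons [simp]: "mprod (x # xs) = x ** mprod xs"
  by (simp_all add: mprod_def)

lemma mprod_scalar_multiples:
  fixes S :: "('a::comm_semiring_1^'n::finite^'n) set"
  assumes "set xs \<subseteq> (\<lambda>(c, A). mat c ** A) ` (UNIV \<times> S)"
  shows "\<exists>c ys. length ys = length xs \<and> set ys \<subseteq> S \<and> mprod xs = mat c ** mprod ys"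
  using assms
proof (induction xs)
  case Nil
  show ?case by (intro exI[of _ 1] exI[of _ "[]"]) simp
next
  case (Cons x xs)
  then obtain d A where x: "x = mat d ** A" and "A \<in> S" by auto
  obtain c ys where "length ys = length xs" "set ys \<subseteq> S" "mprod xs = mat c ** mprod ys"
    using Cons by auto
  then show ?case
    using \<open>A \<in> S\<close> by (intro exI[of _ "d * c"] exI[of _ "A # ys"]) (simp add: x mat_mul_mat_mul)
qed

lemma k_maximal_scalar_closed:
  fixes S :: "('a::comm_semiring_1^'n::finite^'n) set"
  assumes "k_maximal S k" "A \<in> S"
  shows "mat c ** A \<in> S"
proof -
  define T where "T = (\<lambda>(c, A). mat c ** A) ` (UNIV \<times> S)"
  have S_nil: "nilpotent_of_degree S k" using assms(1) by (simp add: k_maximal_def)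
  then have S_mult: "\<And>B C. B \<in> S \<Longrightarrow> C \<in> S \<Longrightarrow> B ** C \<in> S"
    and S_0: "0 \<in> S"
    and S_null: "\<And>ys. length ys = k \<Longrightarrow> set ys \<subseteq> S \<Longrightarrow> mprod ys = 0"
    and S_witness: "\<exists>xs. length xs = k - 1 \<and> set xs \<subseteq> S \<and> mprod xs \<noteq> 0"
    unfolding nilpotent_of_degree_def msubsemigroup_def by simp_all
  have "S \<subseteq> T"
  proof
    fix B assume "B \<in> S"
    then show "B \<in> T" unfolding T_def by (intro image_eqI[of _ _ "(1, B)"]) simp_all
  qed
  have "nilpotent_of_degree T k"
    unfolding nilpotent_of_degree_def msubsemigroup_def
  proof (intro conjI ballI allI impI)
    fix x y assume "x \<in> T" "y \<in> T"
    then obtain c d B C where "x = mat c ** B" "y = mat d ** C" "B \<in> S" "C \<in> S"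
      unfolding T_def by auto
    then show "x ** y \<in> T"
      unfolding T_def
      by (intro image_eqI[of _ _ "(c * d, B ** C)"]) (simp_all add: mat_mul_mat_mul S_mult)
  next
    show "0 \<in> T" using S_0 \<open>S \<subseteq> T\<close> by blast
  next
    fix xs assume "length xs = k \<and> set xs \<subseteq> T"
    then obtain c ys where "length ys = k" "set ys \<subseteq> S" "mprod xs = mat c ** mprod ys"
      using mprod_scalar_multiples[of xs S] unfolding T_def by auto
    then show "mprod xs = 0" using S_null by simp
  next
    show "\<exists>xs. length xs = k - 1 \<and> set xs \<subseteq> T \<and> mprod xs \<noteq> 0"
      using S_witness \<open>S \<subseteq> T\<close> by blast
  qed
  then have "T = S" using assms(1) \<open>S \<subseteq> T\<close> by (simp add: k_maximal_def)
  moreover have "mat c ** A \<in> T" unfolding T_def using assms(2) by auto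
  ultimately show ?thesis by simp
qed

lemma nilpotent_of_degree_nonzero_element:
  assumes "nilpotent_of_degree S k" "k \<ge> 2"
  obtains A where "A \<in> S" "A \<noteq> 0"
proof -
  obtain xs where "length xs = k - 1" "set xs \<subseteq> S" "mprod xs \<noteq> 0"
    using assms(1) by (auto simp: nilpotent_of_degree_def)
  moreover from this assms(2) obtain A ys where "xs = A # ys" by (cases xs) auto
  ultimately have "A \<in> S" "A \<noteq> 0" by auto
  then show thesis by (rule that)
qed

lemma k_maximal_eqpoll_field:
  fixes S :: "('a::idom^'n::finite^'n) set"
  assumes "infinite (UNIV :: 'a set)" "k \<ge> 2" "k_maximal S k"
  shows "S \<approx> (UNIV :: 'a set)"
proof (rule lepoll_antisym)
  show "S \<lesssim> (UNIV :: 'a set)"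
    by (rule lepoll_trans[OF subset_imp_lepoll[OF subset_UNIV] matrices_lepoll_infinite[OF assms(1)]])
  obtain A where "A \<in> S" "A \<noteq> 0"
    using assms(2,3) nilpotent_of_degree_nonzero_element by (auto simp: k_maximal_def)
  then obtain i j where "A $ i $ j \<noteq> 0" by (auto simp: vec_eq_iff)
  have "inj (\<lambda>c. mat c ** A)"
  proof (rule injI)
    fix c d assume "mat c ** A = mat d ** A"
    then have "c * A $ i $ j = d * A $ i $ j" by (metis mat_mul_component)
    with \<open>A $ i $ j \<noteq> 0\<close> show "c = d" by simp
  qed
  moreover have "range (\<lambda>c. mat c ** A) \<subseteq> S"
    using k_maximal_scalar_closed[OF assms(3) \<open>A \<in> S\<close>] by blast
  ultimately show "(UNIV :: 'a set) \<lesssim> S" unfolding lepoll_def by blast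
qed

lemma nilpotent_of_degree_2_mult_eq_0:
  assumes "nilpotent_of_degree S 2" "x \<in> S" "y \<in> S"
  shows "x ** y = 0"
proof -
  have "\<forall>xs. length xs = 2 \<and> set xs \<subseteq> S \<longrightarrow> mprod xs = 0"
    using assms(1) by (simp add: nilpotent_of_degree_def)
  then have "mprod [x, y] = 0" using assms(2,3) by (auto dest: spec[of _ "[x, y]"])
  then show ?thesis by simp
qed

lemma null_semigroups_isomorphic:
  fixes S T :: "('a::semiring_1^'n::finite^'n) set"
  assumes "S \<approx> T" "0 \<in> S" "0 \<in> T"
    and S_null: "\<And>x y. x \<in> S \<Longrightarrow> y \<in> S \<Longrightarrow> x ** y = 0"
    and T_null: "\<And>x y. x \<in> T \<Longrightarrow> y \<in> T \<Longrightarrow> x ** y = 0"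
  shows "semigroup_isomorphic S T"
proof -
  obtain g where g: "bij_betw g S T" using assms(1) unfolding eqpoll_def by blast
  define f where "f = Transposition.transpose (g 0) 0 \<circ> g"
  have "g 0 \<in> T" using g \<open>0 \<in> S\<close> by (rule bij_betw_apply)
  then have f: "bij_betw f S T" unfolding f_def using \<open>0 \<in> T\<close>
    by (intro bij_betw_trans[OF g]) simp
  have "f (x ** y) = f x ** f y" if "x \<in> S" "y \<in> S" for x y
  proof -
    have "f x \<in> T" "f y \<in> T" using f that by (auto dest: bij_betwE)
    then show ?thesis using that S_null T_null by (simp add: f_def)
  qed
  with f show ?thesis unfolding semigroup_isomorphic_def by blast
qed

theorem corollary11:
  fixes S T :: "('a::field ^'n::finite^'n) set"
  assumes "infinite (UNIV :: 'a set)"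
    and "CARD('n) \<ge> 2"
    and "k_maximal S 2" and "k_maximal T 2"
  shows "semigroup_isomorphic S T"
proof (rule null_semigroups_isomorphic)
  have "S \<approx> (UNIV :: 'a set)" "T \<approx> (UNIV :: 'a set)"
    using k_maximal_eqpoll_field assms(1,3,4) by auto
  then show "S \<approx> T" using eqpoll_sym eqpoll_trans by blast
  have S_nil: "nilpotent_of_degree S 2" and T_nil: "nilpotent_of_degree T 2"
    using assms(3,4) by (simp_all add: k_maximal_def)
  then show "0 \<in> S" "0 \<in> T" by (simp_all add: nilpotent_of_degree_def)
  show "x ** y = 0" if "x \<in> S" "y \<in> S" for x y
    using S_nil that by (rule nilpotent_of_degree_2_mult_eq_0)
  show "x ** y = 0" if "x \<in> T" "y \<in> T" for x y
    using T_nil that by (rule nilpotent_of_degree_2_mult_eq_0)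
qed

end
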